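(* Let $F=\mathbb{F}_q$ be a finite field of odd order $q$, and let $K/F$ be an extension of degree $3$. Then there exists a two-dimensional $F$-linear subspace $V\subset K$ such that whenever $y\in V$ and $y^2\in V$, we have $y=0$. Consequently $|V|=q^2=|K|^{2/3}$, and $V$ contains no $x,y\in K$ with $y\neq0$ such that $x,\,x+y,\,x+y^2\in V$. *)

theory Defs
  imports "HOL-Algebra.Algebra"
begin

end

theory Submission
  imports Defs
begin

(*
  Choose a nonsquare \<nu> of F (q is odd) and \<theta> with K = F \<theta>\<^sup>2 + F \<theta> + F (there is no
  intermediate quadratic field since 2 does not divide 3), and put E = F \<theta> + F.
  The plane W = F (\<theta>\<^sup>2 + \<nu>) + F \<theta> contains no nonzero square of E: comparing coordinates,
  (s \<theta> + t)\<^sup>2 \<in> W forces t\<^sup>2 = \<nu> s\<^sup>2, hence s = t = 0. Two planes in a three-dimensional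
  space meet, so there is w \<noteq> 0 in W \<inter> \<theta>\<^sup>-\<^sup>1 W, i.e. w E \<subseteq> W. Take V = w\<^sup>-\<^sup>1 E: if y and
  y\<^sup>2 lie in V, then e = y w and e' = y\<^sup>2 w lie in E and e\<^sup>2 = e' w \<in> W, so y = 0.
  The last claim follows because V is closed under subtraction: y = (x + y) - x and
  y\<^sup>2 = (x + y\<^sup>2) - x.
*)

context ring
begin

lemma Span_Cons: "Span K (u # Us) = line_extension K u (Span K Us)"
  by simp

lemma Span_mono_scalars:
  assumes "K \<subseteq> K'"
  shows "Span K Us \<subseteq> Span K' Us"
proof (induction Us)
  case (Cons u Us)
  then show ?case
    using assms unfolding Span_Cons[of _ u] subset_iff line_extension_mem_iff by blast
qed simp

lemma mem_Span_single_iff: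
  assumes "K \<subseteq> carrier R" "a \<in> carrier R"
  shows "x \<in> Span K [a] \<longleftrightarrow> (\<exists>k\<in>K. x = k \<otimes> a)"
  using assms by (auto simp: line_extension_mem_iff subset_iff)

lemma mem_Span_pair_iff:
  assumes "K \<subseteq> carrier R" "b \<in> carrier R"
  shows "x \<in> Span K [a, b] \<longleftrightarrow> (\<exists>k\<in>K. \<exists>l\<in>K. x = k \<otimes> a \<oplus> l \<otimes> b)"
  unfolding Span_Cons[of K a] line_extension_mem_iff
  by (fastforce simp: mem_Span_single_iff[OF assms] simp del: Span.simps)

lemma mem_Span_triple_iff:
  assumes "K \<subseteq> carrier R" "c \<in> carrier R"
  shows "x \<in> Span K [a, b, c] \<longleftrightarrow> (\<exists>k\<in>K. \<exists>l\<in>K. \<exists>m\<in>K. x = k \<otimes> a \<oplus> (l \<otimes> b \<oplus> m \<otimes> c))"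
  unfolding Span_Cons[of K a] line_extension_mem_iff
  by (fastforce simp: mem_Span_pair_iff[OF assms] simp del: Span.simps)

lemma line_extension_mult_right:
  assumes "K \<subseteq> carrier R" "a \<in> carrier R" "u \<in> carrier R" "E \<subseteq> carrier R"
  shows "line_extension K (u \<otimes> a) ((\<lambda>x. x \<otimes> a) ` E) = (\<lambda>x. x \<otimes> a) ` line_extension K u E"
proof (intro equalityI subsetI)
  fix x assume "x \<in> line_extension K (u \<otimes> a) ((\<lambda>x. x \<otimes> a) ` E)"
  then obtain k v where kv: "k \<in> K" "v \<in> E" "x = k \<otimes> (u \<otimes> a) \<oplus> v \<otimes> a"
    unfolding line_extension_mem_iff by blast
  then have "x = (k \<otimes> u \<oplus> v) \<otimes> a" using assms by (simp add: l_distr m_assoc subsetD)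
  then show "x \<in> (\<lambda>x. x \<otimes> a) ` line_extension K u E"
    using kv line_extension_mem_iff by blast
next
  fix x assume "x \<in> (\<lambda>x. x \<otimes> a) ` line_extension K u E"
  then obtain y where "y \<in> line_extension K u E" "x = y \<otimes> a" by blast
  then obtain k v where kv: "k \<in> K" "v \<in> E" "x = (k \<otimes> u \<oplus> v) \<otimes> a"
    unfolding line_extension_mem_iff by blast
  then have "x = k \<otimes> (u \<otimes> a) \<oplus> v \<otimes> a" using assms by (simp add: l_distr m_assoc subsetD)
  then show "x \<in> line_extension K (u \<otimes> a) ((\<lambda>x. x \<otimes> a) ` E)"
    using kv line_extension_mem_iff by blast
qed

lemma Span_map_mult_right:
  assumes "K \<subseteq> carrier R" "a \<in> carrier R" "set Us \<subseteq> carrier R"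
  shows "Span K (map (\<lambda>u. u \<otimes> a) Us) = (\<lambda>x. x \<otimes> a) ` Span K Us"
  using assms(3)
proof (induction Us)
  case (Cons u Us)
  then show ?case
    using line_extension_mult_right[OF assms(1,2)] Span_in_carrier[OF assms(1), of Us]
    by (simp only: list.map Span_Cons) simp
qed (use assms(2) in simp)

lemma independent_map_mult_right:
  assumes "K \<subseteq> carrier R" "a \<in> Units R" "independent K Us"
  shows "independent K (map (\<lambda>u. u \<otimes> a) Us)"
  using assms(3)
proof (induction Us rule: list.induct)
  case (Cons u Us)
  note u = independent_backwards[OF Cons.prems]
  have a: "a \<in> carrier R" using assms(2) by blast
  have Us_carrier: "Span K Us \<subseteq> carrier R"
    using Span_in_carrier[OF assms(1) independent_in_carrier[OF u(2)]] .
  have "u \<otimes> a \<notin> (\<lambda>x. x \<otimes> a) ` Span K Us"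
  proof
    assume "u \<otimes> a \<in> (\<lambda>x. x \<otimes> a) ` Span K Us"
    then obtain x where x: "x \<in> Span K Us" "u \<otimes> a = x \<otimes> a" by blast
    have "x \<in> carrier R" using x(1) Us_carrier by blast
    have "u = (u \<otimes> a) \<otimes> inv a" using u(3) assms(2) by (simp add: m_assoc Units_closed)
    also have "\<dots> = x" using x(2) \<open>x \<in> carrier R\<close> assms(2) by (simp add: m_assoc Units_closed)
    finally show False using x(1) u(1) by blast
  qed
  then show ?case
    using Cons.IH[OF u(2)] Span_map_mult_right[OF assms(1) a independent_in_carrier[OF u(2)]] a u(3)
    by (auto intro: independent.li_Cons)
qed simp

lemma independent_coeffs_unique:
  assumes "subfield K R" "independent K Us"
    and "set Ks \<subseteq> K" "length Ks = length Us" "set Ks' \<subseteq> K" "length Ks' = length Us"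
    and "combine Ks Us = combine Ks' Us"
  shows "Ks = Ks'"
proof -
  have "combine Ks Us \<in> Span K Us"
    using assms(3,4) Span_eq_combine_set_length_version[OF assms(1) independent_in_carrier[OF assms(2)]]
    by auto
  from unique_decomposition[OF assms(1,2) this] show ?thesis
    using assms(3-7) by (metis (mono_tags, lifting))
qed

lemma card_Span:
  assumes "subfield K R" "finite K" "independent K Us"
  shows "card (Span K Us) = card K ^ length Us"
proof -
  let ?coeffs = "{Ks. set Ks \<subseteq> K \<and> length Ks = length Us}"
  have "Span K Us = (\<lambda>Ks. combine Ks Us) ` ?coeffs"
    using Span_eq_combine_set_length_version[OF assms(1) independent_in_carrier[OF assms(3)]] by auto
  moreover have "inj_on (\<lambda>Ks. combine Ks Us) ?coeffs"
    using independent_coeffs_unique[OF assms(1,3)] by (auto intro: inj_onI)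
  ultimately show ?thesis by (simp add: card_image card_lists_length_eq assms(2))
qed

lemma card_of_dimension:
  assumes "subfield K R" "finite K" "dimension n K E"
  shows "card E = card K ^ n"
  using exists_base[OF assms(1,3)] card_Span[OF assms(1,2)] by metis

lemma dimension_dvd_of_intermediate_subfield:
  assumes "subfield K R" "subfield E R" "K \<subseteq> E"
    and "dimension n K (carrier R)" "dimension d K E"
  shows "d dvd n"
proof -
  obtain Bs where Bs: "set Bs \<subseteq> carrier R" "Span K Bs = carrier R"
    using exists_base[OF assms(1,4)] by blast
  have "Span E Bs = carrier R"
    using Span_mono_scalars[OF assms(3), of Bs] Span_in_carrier[OF subfieldE(3)[OF assms(2)] Bs(1)] Bs(2)
    by blast
  then obtain m where "dimension m E (carrier R)"
    using Span_finite_dimension[OF assms(2) Bs(1)] by auto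
  then have "dimension (d * m) K (carrier R)" using telescopic_base[OF assms(1,2,5)] by blast
  then show ?thesis using dimension_is_inj[OF assms(1,4)] by simp
qed

lemma Span_pair_one_mult_mem:
  assumes K: "subfield K R" and "a \<in> carrier R" "w \<in> carrier R" "set Us \<subseteq> carrier R"
    and "w \<in> Span K Us" "a \<otimes> w \<in> Span K Us"
  shows "\<forall>e\<in>Span K [a, \<one>]. e \<otimes> w \<in> Span K Us"
proof
  fix e assume "e \<in> Span K [a, \<one>]"
  then obtain s t where st: "s \<in> K" "t \<in> K" "e = s \<otimes> a \<oplus> t \<otimes> \<one>"
    using mem_Span_pair_iff[OF subfieldE(3)[OF K]] by blast
  then have "s \<in> carrier R" "t \<in> carrier R" using subfieldE(3)[OF K] by auto
  then have "e \<otimes> w = s \<otimes> (a \<otimes> w) \<oplus> t \<otimes> w" unfolding st(3) using assms(2,3) by algebra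
  then show "e \<otimes> w \<in> Span K Us"
    using Span_subgroup_props(3)[OF K assms(4)] Span_smult_closed[OF K assms(4)] assms(5,6) st(1,2)
    by simp
qed

lemma exists_nonsquare:
  assumes "subring F R" "finite F" "\<one> \<oplus> \<one> \<noteq> \<zero>"
  obtains \<nu> where "\<nu> \<in> F" "\<forall>s\<in>F. s \<otimes> s \<noteq> \<nu>"
proof -
  have "\<one> \<noteq> \<ominus> \<one>" using assms(3) by (metis one_closed r_neg)
  moreover have "\<one> \<in> F" "\<ominus> \<one> \<in> F" "\<one> \<otimes> \<one> = \<ominus> \<one> \<otimes> \<ominus> \<one>"
    using subringE(3,5)[OF assms(1)] by (auto simp: l_minus r_minus)
  ultimately have "\<not> inj_on (\<lambda>s. s \<otimes> s) F" by (meson inj_onD)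
  then have "\<not> F \<subseteq> (\<lambda>s. s \<otimes> s) ` F" using finite_surj_inj[OF assms(2)] by blast
  then show ?thesis using that by blast
qed

lemma no_square_difference_progression:
  assumes "subalgebra K V R" "\<forall>y\<in>V. y \<otimes> y \<in> V \<longrightarrow> y = \<zero>"
  shows "\<not> (\<exists>x\<in>carrier R. \<exists>y\<in>carrier R. y \<noteq> \<zero> \<and> x \<in> V \<and> x \<oplus> y \<in> V \<and> x \<oplus> y \<otimes> y \<in> V)"
proof clarify
  fix x y assume xy: "x \<in> carrier R" "y \<in> carrier R" "y \<noteq> \<zero>" "x \<in> V" "x \<oplus> y \<in> V" "x \<oplus> y \<otimes> y \<in> V"
  interpret V: additive_subgroup V R
    using additive_subgroupI[OF subalgebra.axioms(1)[OF assms(1)]] .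
  have "(x \<oplus> y) \<oplus> \<ominus> x = y" "(x \<oplus> y \<otimes> y) \<oplus> \<ominus> x = y \<otimes> y"
    using xy(1,2) by algebra+
  then have "y \<in> V" "y \<otimes> y \<in> V" using xy(4-6) by (metis V.a_closed V.a_inv_closed)+
  then show False using assms(2) xy(3) by blast
qed

end

context domain
begin

lemma one_plus_one_neq_zero_of_odd_card:
  assumes "finite (carrier R)" "odd (card (carrier R))"
  shows "\<one> \<oplus> \<one> \<noteq> \<zero>"
proof
  assume char2: "\<one> \<oplus> \<one> = \<zero>"
  have "\<ominus> \<one> = \<one>" using char2 by (metis minus_equality one_closed)
  then have "additive_subgroup {\<zero>, \<one>} R"
    using char2 by (intro additive_subgroupI add.subgroupI) auto
  then have "card (a_rcosets {\<zero>, \<one>}) * card {\<zero>, \<one>} = card (carrier R)"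
    using a_lagrange[OF assms(1)] unfolding order_def by blast
  then have "card (a_rcosets {\<zero>, \<one>}) * 2 = card (carrier R)" by simp
  with assms(2) show False by (metis dvd_triv_right)
qed

end

context field
begin

lemma exists_power_base_of_dimension_3:
  assumes F: "subfield F R" and dim: "dimension 3 F (carrier R)"
  obtains \<theta> where "\<theta> \<in> carrier R" "independent F [\<theta> \<otimes> \<theta>, \<theta>, \<one>]"
proof -
  have F_carrier: "F \<subseteq> carrier R" using subfieldE(3)[OF F] .
  have "independent F [\<one>]" by (intro independent.li_Cons) auto
  then have "dimension 1 F (Span F [\<one>])" using dimension_independent by fastforce
  then have "Span F [\<one>] \<noteq> carrier R" using dimension_is_inj[OF F _ dim] by fastforce
  then obtain \<theta> where \<theta>: "\<theta> \<in> carrier R" "\<theta> \<notin> Span F [\<one>]"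
    using Span_in_carrier[OF F_carrier, of "[\<one>]"] by auto
  have alg: "(algebraic over F) \<theta>"
    using finite_dimension_imp_algebraic[OF F carrier_is_subring finite_dimensionI[OF dim] \<theta>(1)] .
  define d where "d = degree (Irr F \<theta>)"
  have "dimension d F (simple_extension F \<theta>)"
    unfolding d_def using dimension_simple_extension[OF F \<theta>(1) alg] .
  then have "d dvd 3"
    using dimension_dvd_of_intermediate_subfield[OF F _ simple_extension_incl[OF F_carrier \<theta>(1)] dim]
      simple_extension_is_subfield[OF F \<theta>(1)] alg by blast
  moreover have "d \<noteq> 1"
  proof
    assume "d = 1"
    then have "simple_extension F \<theta> = Span F [\<one>]"
      using Span_exp_base[OF F \<theta>(1) alg] unfolding d_def by (simp add: exp_base_def)
    then show False using simple_extension_mem[OF subfieldE(1)[OF F] \<theta>(1)] \<theta>(2) by blast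
  qed
  ultimately have "d = 3" using prime_nat_iff[of 3] by auto
  then have "independent F (exp_base \<theta> 3)"
    using exp_base_independent[OF F \<theta>(1) alg] unfolding d_def by simp
  then show ?thesis using that \<theta>(1) by (simp add: exp_base_def numeral_3_eq_3)
qed

lemma twisted_plane_contains_no_square:
  assumes F: "subfield F R" and ind: "independent F [\<theta> \<otimes> \<theta>, \<theta>, \<one>]"
    and \<nu>: "\<nu> \<in> F" "\<forall>r\<in>F. r \<otimes> r \<noteq> \<nu>"
  shows "\<forall>e\<in>Span F [\<theta>, \<one>]. e \<otimes> e \<in> Span F [\<theta> \<otimes> \<theta> \<oplus> \<nu>, \<theta>] \<longrightarrow> e = \<zero>"
proof (intro ballI impI)
  fix e assume e: "e \<in> Span F [\<theta>, \<one>]" and ee: "e \<otimes> e \<in> Span F [\<theta> \<otimes> \<theta> \<oplus> \<nu>, \<theta>]"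
  have F_carrier: "F \<subseteq> carrier R" using subfieldE(3)[OF F] .
  have \<theta>: "\<theta> \<in> carrier R" using independent_in_carrier[OF ind] by simp
  have F_closed: "\<And>a b. a \<in> F \<Longrightarrow> b \<in> F \<Longrightarrow> a \<oplus> b \<in> F" "\<And>a b. a \<in> F \<Longrightarrow> b \<in> F \<Longrightarrow> a \<otimes> b \<in> F"
    using subringE(6,7)[OF subfieldE(1)[OF F]] by auto
  obtain s t where st: "s \<in> F" "t \<in> F" "e = s \<otimes> \<theta> \<oplus> t \<otimes> \<one>"
    using e mem_Span_pair_iff[OF F_carrier] by blast
  obtain a b where ab: "a \<in> F" "b \<in> F" "e \<otimes> e = a \<otimes> (\<theta> \<otimes> \<theta> \<oplus> \<nu>) \<oplus> b \<otimes> \<theta>"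
    using ee mem_Span_pair_iff[OF F_carrier \<theta>] by blast
  have carrier: "s \<in> carrier R" "t \<in> carrier R" "a \<in> carrier R" "b \<in> carrier R" "\<nu> \<in> carrier R"
    using st ab \<nu> F_carrier by auto
  have "combine [s \<otimes> s, s \<otimes> t \<oplus> s \<otimes> t, t \<otimes> t] [\<theta> \<otimes> \<theta>, \<theta>, \<one>] = e \<otimes> e"
    unfolding st(3) using carrier \<theta> by simp algebra
  also have "\<dots> = combine [a, b, a \<otimes> \<nu>] [\<theta> \<otimes> \<theta>, \<theta>, \<one>]"
    unfolding ab(3) using carrier \<theta> by simp algebra
  finally have "[s \<otimes> s, s \<otimes> t \<oplus> s \<otimes> t, t \<otimes> t] = [a, b, a \<otimes> \<nu>]"
    by (rule independent_coeffs_unique[OF F ind, rotated 4]) (use st ab \<nu> F_closed in auto)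
  then have tt: "t \<otimes> t = \<nu> \<otimes> (s \<otimes> s)" using carrier by (simp add: m_comm)
  show "e = \<zero>"
  proof (cases "s = \<zero>")
    case True
    then have "t = \<zero>" using tt carrier integral_iff by auto
    with True show ?thesis using st(3) \<theta> by simp
  next
    case False
    have inv_s: "inv s \<in> F" "s \<otimes> inv s = \<one>"
      using subfield_m_inv[OF F, of s] st(1) False by auto
    have "inv s \<in> carrier R" using inv_s(1) F_carrier by blast
    then have "(t \<otimes> inv s) \<otimes> (t \<otimes> inv s) = (t \<otimes> t) \<otimes> (inv s \<otimes> inv s)"
      using carrier by algebra
    also have "\<dots> = \<nu> \<otimes> ((s \<otimes> inv s) \<otimes> (s \<otimes> inv s))"
      unfolding tt using carrier \<open>inv s \<in> carrier R\<close> by algebra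
    finally have "(t \<otimes> inv s) \<otimes> (t \<otimes> inv s) = \<nu>" using inv_s carrier by simp
    then show ?thesis using \<nu>(2) F_closed(2)[OF st(2) inv_s(1)] by blast
  qed
qed

text \<open>The \<open>\<theta>\<^sup>2\<close>- and \<open>1\<close>-coordinates of both \<open>w\<close> and \<open>\<theta> w\<close> are in the ratio \<open>1 : \<nu>\<close>.\<close>

lemma multiplier_into_twisted_plane:
  assumes F: "subfield F R" and ind: "independent F [\<theta> \<otimes> \<theta>, \<theta>, \<one>]"
    and c: "c2 \<in> F" "c1 \<in> F" "c0 \<in> F"
    and cube: "\<theta> \<otimes> (\<theta> \<otimes> \<theta>) = c2 \<otimes> (\<theta> \<otimes> \<theta>) \<oplus> (c1 \<otimes> \<theta> \<oplus> c0 \<otimes> \<one>)"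
    and \<nu>: "\<nu> \<in> F" "\<nu> \<noteq> \<zero>"
  defines "w \<equiv> \<nu> \<otimes> (\<theta> \<otimes> \<theta> \<oplus> \<nu>) \<oplus> (c0 \<ominus> \<nu> \<otimes> c2) \<otimes> \<theta>"
  shows "w \<noteq> \<zero>" and "w \<in> Span F [\<theta> \<otimes> \<theta> \<oplus> \<nu>, \<theta>]" and "\<theta> \<otimes> w \<in> Span F [\<theta> \<otimes> \<theta> \<oplus> \<nu>, \<theta>]"
proof -
  have F_carrier: "F \<subseteq> carrier R" using subfieldE(3)[OF F] .
  have \<theta>: "\<theta> \<in> carrier R" using independent_in_carrier[OF ind] by simp
  have carrier: "c2 \<in> carrier R" "c1 \<in> carrier R" "c0 \<in> carrier R" "\<nu> \<in> carrier R"
    using c \<nu> F_carrier by auto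
  have F_closed: "\<And>a b. a \<in> F \<Longrightarrow> b \<in> F \<Longrightarrow> a \<oplus> b \<in> F" "\<And>a b. a \<in> F \<Longrightarrow> b \<in> F \<Longrightarrow> a \<otimes> b \<in> F"
    "\<And>a b. a \<in> F \<Longrightarrow> b \<in> F \<Longrightarrow> a \<ominus> b \<in> F" "\<zero> \<in> F"
    using subringE(2,5,6,7)[OF subfieldE(1)[OF F]] by (auto simp: a_minus_def)
  have coeffs: "c0 \<ominus> \<nu> \<otimes> c2 \<in> F" "\<nu> \<otimes> \<nu> \<in> F" "\<nu> \<otimes> c1 \<oplus> \<nu> \<otimes> \<nu> \<in> F"
    using c \<nu>(1) by (simp_all add: F_closed)
  show "w \<in> Span F [\<theta> \<otimes> \<theta> \<oplus> \<nu>, \<theta>]"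
    unfolding mem_Span_pair_iff[OF F_carrier \<theta>] w_def using coeffs(1) \<nu>(1) by blast
  have "\<theta> \<otimes> w = \<nu> \<otimes> (\<theta> \<otimes> (\<theta> \<otimes> \<theta>)) \<oplus> \<nu> \<otimes> \<nu> \<otimes> \<theta> \<oplus> (c0 \<ominus> \<nu> \<otimes> c2) \<otimes> (\<theta> \<otimes> \<theta>)"
    unfolding w_def using \<theta> carrier by algebra
  also have "\<dots> = c0 \<otimes> (\<theta> \<otimes> \<theta> \<oplus> \<nu>) \<oplus> (\<nu> \<otimes> c1 \<oplus> \<nu> \<otimes> \<nu>) \<otimes> \<theta>"
    unfolding cube using \<theta> carrier by algebra
  finally show "\<theta> \<otimes> w \<in> Span F [\<theta> \<otimes> \<theta> \<oplus> \<nu>, \<theta>]"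
    unfolding mem_Span_pair_iff[OF F_carrier \<theta>] using c(3) coeffs(3) by blast
  show "w \<noteq> \<zero>"
  proof
    assume "w = \<zero>"
    then have "combine [\<nu>, c0 \<ominus> \<nu> \<otimes> c2, \<nu> \<otimes> \<nu>] [\<theta> \<otimes> \<theta>, \<theta>, \<one>] = combine [\<zero>, \<zero>, \<zero>] [\<theta> \<otimes> \<theta>, \<theta>, \<one>]"
      unfolding w_def using \<theta> carrier by simp algebra
    then have "[\<nu>, c0 \<ominus> \<nu> \<otimes> c2, \<nu> \<otimes> \<nu>] = [\<zero>, \<zero>, \<zero>]"
      by (rule independent_coeffs_unique[OF F ind, rotated 4]) (use \<nu>(1) coeffs F_closed(4) in auto)
    with \<nu>(2) show False by simp
  qed
qed

lemma rescaled_square_free: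
  assumes "w \<in> carrier R" "w \<noteq> \<zero>" "E \<subseteq> carrier R"
    and "\<forall>e\<in>E. e \<otimes> w \<in> W"
    and "\<forall>e\<in>E. e \<otimes> e \<in> W \<longrightarrow> e = \<zero>"
  shows "\<forall>y\<in>(\<lambda>x. x \<otimes> inv w) ` E. y \<otimes> y \<in> (\<lambda>x. x \<otimes> inv w) ` E \<longrightarrow> y = \<zero>"
proof (intro ballI impI)
  fix y assume y: "y \<in> (\<lambda>x. x \<otimes> inv w) ` E" and yy: "y \<otimes> y \<in> (\<lambda>x. x \<otimes> inv w) ` E"
  have w: "w \<in> Units R" using assms(1,2) field_Units by blast
  obtain e where e: "e \<in> E" "y = e \<otimes> inv w" using y by blast
  obtain e' where e': "e' \<in> E" "y \<otimes> y = e' \<otimes> inv w" using yy by blast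
  have carrier: "e \<in> carrier R" "e' \<in> carrier R" "y \<in> carrier R" using e e'(1) assms(3) w by auto
  have "e \<otimes> e = (y \<otimes> w) \<otimes> (y \<otimes> w)" using e(2) carrier w by (simp add: m_assoc Units_closed)
  also have "\<dots> = ((y \<otimes> y) \<otimes> w) \<otimes> w" using carrier assms(1) by algebra
  also have "\<dots> = e' \<otimes> w" using e'(2) carrier w by (simp add: m_assoc Units_closed)
  finally have "e \<otimes> e \<in> W" using assms(4) e'(1) by simp
  then have "e = \<zero>" using assms(5) e(1) by blast
  then show "y = \<zero>" using e(2) w by simp
qed

lemma square_free_plane_of_power_base:
  assumes F: "subfield F R" and ind: "independent F [\<theta> \<otimes> \<theta>, \<theta>, \<one>]"
    and span: "Span F [\<theta> \<otimes> \<theta>, \<theta>, \<one>] = carrier R"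
    and \<nu>: "\<nu> \<in> F" "\<forall>s\<in>F. s \<otimes> s \<noteq> \<nu>"
  obtains Us where "independent F Us" "length Us = 2"
    and "\<forall>y\<in>Span F Us. y \<otimes> y \<in> Span F Us \<longrightarrow> y = \<zero>"
proof -
  have F_carrier: "F \<subseteq> carrier R" using subfieldE(3)[OF F] .
  have \<theta>: "\<theta> \<in> carrier R" using independent_in_carrier[OF ind] by simp
  have "\<nu> \<noteq> \<zero>" using \<nu> subringE(2)[OF subfieldE(1)[OF F]] by force
  have "\<theta> \<otimes> (\<theta> \<otimes> \<theta>) \<in> Span F [\<theta> \<otimes> \<theta>, \<theta>, \<one>]" unfolding span using \<theta> by simp
  then obtain c2 c1 c0 where c: "c2 \<in> F" "c1 \<in> F" "c0 \<in> F"
    and cube: "\<theta> \<otimes> (\<theta> \<otimes> \<theta>) = c2 \<otimes> (\<theta> \<otimes> \<theta>) \<oplus> (c1 \<otimes> \<theta> \<oplus> c0 \<otimes> \<one>)"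
    unfolding mem_Span_triple_iff[OF F_carrier one_closed] by blast
  define w where "w = \<nu> \<otimes> (\<theta> \<otimes> \<theta> \<oplus> \<nu>) \<oplus> (c0 \<ominus> \<nu> \<otimes> c2) \<otimes> \<theta>"
  have w: "w \<noteq> \<zero>" "w \<in> Span F [\<theta> \<otimes> \<theta> \<oplus> \<nu>, \<theta>]" "\<theta> \<otimes> w \<in> Span F [\<theta> \<otimes> \<theta> \<oplus> \<nu>, \<theta>]"
    unfolding w_def using multiplier_into_twisted_plane[OF F ind c cube \<nu>(1) \<open>\<nu> \<noteq> \<zero>\<close>] by auto
  have "c2 \<in> carrier R" "c0 \<in> carrier R" "\<nu> \<in> carrier R" using c \<nu>(1) F_carrier by auto
  then have w_carrier: "w \<in> carrier R" unfolding w_def using \<theta> by simp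
  have "set [\<theta> \<otimes> \<theta> \<oplus> \<nu>, \<theta>] \<subseteq> carrier R" using \<theta> \<nu>(1) F_carrier by auto
  note w_E = Span_pair_one_mult_mem[OF F \<theta> w_carrier this w(2,3)]
  have "w \<in> Units R" using w_carrier w(1) field_Units by simp
  then have inv_w: "inv w \<in> Units R" by simp
  let ?Us = "map (\<lambda>u. u \<otimes> inv w) [\<theta>, \<one>]"
  have ind_Us: "independent F ?Us"
    using independent_map_mult_right[OF F_carrier inv_w independent_backwards(2)[OF ind]] .
  have V_rescaled: "Span F ?Us = (\<lambda>x. x \<otimes> inv w) ` Span F [\<theta>, \<one>]"
    using Span_map_mult_right[OF F_carrier Units_closed[OF inv_w], of "[\<theta>, \<one>]"] \<theta>
    by (simp del: Span.simps)
  have E_carrier: "Span F [\<theta>, \<one>] \<subseteq> carrier R"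
    using Span_in_carrier[OF F_carrier, of "[\<theta>, \<one>]"] \<theta> by simp
  have "\<forall>y\<in>Span F ?Us. y \<otimes> y \<in> Span F ?Us \<longrightarrow> y = \<zero>"
    unfolding V_rescaled
    using rescaled_square_free[OF w_carrier w(1) E_carrier w_E twisted_plane_contains_no_square[OF F ind \<nu>]] .
  from that[OF ind_Us _ this] show ?thesis by simp
qed
end

theorem theorem5p1:
  fixes R :: "('a, 'b) ring_scheme" (structure) and F :: "'a set"
  assumes "field R"
    and "finite (carrier R)"
    and "subfield F R"
    and "odd (card F)"
    and "ring.dimension R 3 F (carrier R)"
  shows "\<exists>V. subalgebra F V R \<and> ring.dimension R 2 F V
           \<and> (\<forall>y\<in>V. y \<otimes> y \<in> V \<longrightarrow> y = \<zero>)
           \<and> card V = card F ^ 2 \<and> card V ^ 3 = card (carrier R) ^ 2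
           \<and> \<not> (\<exists>x\<in>carrier R. \<exists>y\<in>carrier R. y \<noteq> \<zero> \<and> x \<in> V \<and> x \<oplus> y \<in> V \<and> x \<oplus> y \<otimes> y \<in> V)"
proof -
  interpret field R by fact
  note F = \<open>subfield F R\<close> and dim3 = \<open>dimension 3 F (carrier R)\<close>
  have finite_F: "finite F" using assms(2) subfieldE(3)[OF F] finite_subset by blast
  have card_K: "card (carrier R) = card F ^ 3" using card_of_dimension[OF F finite_F dim3] .
  then have "\<one> \<oplus> \<one> \<noteq> \<zero>" using one_plus_one_neq_zero_of_odd_card[OF assms(2)] assms(4) by simp
  then obtain \<nu> where \<nu>: "\<nu> \<in> F" "\<forall>s\<in>F. s \<otimes> s \<noteq> \<nu>"
    using exists_nonsquare[OF subfieldE(1)[OF F] finite_F] by blast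
  obtain \<theta> where \<theta>: "\<theta> \<in> carrier R" "independent F [\<theta> \<otimes> \<theta>, \<theta>, \<one>]"
    using exists_power_base_of_dimension_3[OF F dim3] .
  have "Span F [\<theta> \<otimes> \<theta>, \<theta>, \<one>] = carrier R"
    using independent_length_eq_dimension[OF F dim3 \<theta>(2)] \<theta>(1) by simp
  then obtain Us where ind: "independent F Us" "length Us = 2"
    and square_free: "\<forall>y\<in>Span F Us. y \<otimes> y \<in> Span F Us \<longrightarrow> y = \<zero>"
    using square_free_plane_of_power_base[OF F \<theta>(2) _ \<nu>] by blast
  have subalg: "subalgebra F (Span F Us) R"
    using Span_is_subalgebra[OF F independent_in_carrier[OF ind(1)]] .
  have "dimension 2 F (Span F Us)" using dimension_independent[OF ind(1)] ind(2) by simp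
  moreover have card_V: "card (Span F Us) = card F ^ 2" using card_Span[OF F finite_F ind(1)] ind(2) by simp
  moreover have "card (Span F Us) ^ 3 = card (carrier R) ^ 2"
    unfolding card_V card_K by (simp flip: power_mult)
  ultimately show ?thesis
    by (intro exI[of _ "Span F Us"] conjI subalg square_free
        no_square_difference_progression[OF subalg square_free])
qed

end
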